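(* There is an absolute constant $C>0$ such that the following holds. Let $\mathbf T:\{0,1\}^n\to\{0,1\}$ be a size-$s$ stochastic decision tree. For every $\varepsilon\in(0,1/2)$ there is a deterministic decision tree $T^\star_{\mathrm{trunc}}:\{0,1\}^n\to\{0,1\}$ such that (1) $\mathrm{depth}(T^\star_{\mathrm{trunc}})\le C\log(s/\varepsilon)/\varepsilon^2$, and (2) $\Pr_{\mathbf x,\mathbf T}[T^\star_{\mathrm{trunc}}(\mathbf x)\neq\mathbf T(\mathbf x)]\le\mathrm{opt}_{\mathbf T}+3\varepsilon$, where $\mathbf x$ is uniform on $\{0,1\}^n$.
   Context: A stochastic decision tree (DT) $\mathbf{T}$ over $\{0,1\}^n$ is a rooted binary tree whose internal nodes are either deterministic nodes, each labeled by a variable $x_i$ ($i\in[n]$) with one outgoing edge followed when $x_i=0$ and one when $x_i=1$, or stochastic nodes, each with two outgoing edges followed with probabilities $p$ and $1-p$ (for a node-specific $p\in[0,1]$, using fresh independent randomness at each node), and whose leaves are labeled $0$ or $1$. On input $x$, $\mathbf{T}(x)$ is the (random) label of the leaf reached. A deterministic DT is one with no stochastic nodes. The size of a DT is its number of leaves; its depth is the maximum number of internal nodes on a root-to-leaf path. The mean function is $\mu_{\mathbf T}(x)=\Pr[\mathbf T(x)=1]$, $\mathrm{round}(t)=\mathbb 1[t\ge1/2]$, and $\mathrm{opt}_{\mathbf T}=\mathbb E_{\mathbf x}\Pr_{\mathbf T}[\mathbf T(\mathbf x)\ne\mathrm{round}(\mu_{\mathbf T}(\mathbf x))]$ is the Bayes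 optimal error. *)

theory Defs
  imports "HOL-Probability.Probability"
begin

text \<open>Inputs are bool lists of length n.
  Node i l r: deterministic node querying x_i, left child if x_i = 0 (False), right if x_i = 1.
  Stoch p l r: stochastic node, goes to l with probability p, to r with probability 1-p.\<close>

datatype sdt = Leaf bool | Node nat sdt sdt | Stoch real sdt sdt

fun wf_sdt :: "nat \<Rightarrow> sdt \<Rightarrow> bool" where
  "wf_sdt n (Leaf b) = True"
| "wf_sdt n (Node i l r) = (i < n \<and> wf_sdt n l \<and> wf_sdt n r)"
| "wf_sdt n (Stoch p l r) = (0 \<le> p \<and> p \<le> 1 \<and> wf_sdt n l \<and> wf_sdt n r)"

fun deterministic :: "sdt \<Rightarrow> bool" where
  "deterministic (Leaf b) = True"
| "deterministic (Node i l r) = (deterministic l \<and> deterministic r)"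
| "deterministic (Stoch p l r) = False"

fun tsize :: "sdt \<Rightarrow> nat" where
  "tsize (Leaf b) = 1"
| "tsize (Node i l r) = tsize l + tsize r"
| "tsize (Stoch p l r) = tsize l + tsize r"

fun depth :: "sdt \<Rightarrow> nat" where
  "depth (Leaf b) = 0"
| "depth (Node i l r) = Suc (max (depth l) (depth r))"
| "depth (Stoch p l r) = Suc (max (depth l) (depth r))"

fun run :: "sdt \<Rightarrow> bool list \<Rightarrow> bool pmf" where
  "run (Leaf b) x = return_pmf b"
| "run (Node i l r) x = (if x ! i then run r x else run l x)"
| "run (Stoch p l r) x = bernoulli_pmf p \<bind> (\<lambda>c. if c then run l x else run r x)"

definition cube :: "nat \<Rightarrow> bool list set" where
  "cube n = {xs. length xs = n}"

definition unif :: "nat \<Rightarrow> bool list pmf" where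
  "unif n = pmf_of_set (cube n)"

definition mu :: "sdt \<Rightarrow> bool list \<Rightarrow> real" where
  "mu T x = measure_pmf.prob (run T x) {True}"

definition round :: "real \<Rightarrow> bool" where
  "round t = (t \<ge> 1/2)"

definition opt :: "nat \<Rightarrow> sdt \<Rightarrow> real" where
  "opt n T = measure_pmf.expectation (unif n)
      (\<lambda>x. measure_pmf.prob (run T x) {y. y \<noteq> round (mu T x)})"

definition joint :: "nat \<Rightarrow> sdt \<Rightarrow> (bool list \<times> bool) pmf" where
  "joint n T = unif n \<bind> (\<lambda>x. run T x \<bind> (\<lambda>y. return_pmf (x, y)))"

text \<open>Pr_{x,T}[T'(x) \<noteq> T(x)] for a deterministic tree T' (whose output is
  the unique value in the support of run T' x).\<close>
definition disagree :: "nat \<Rightarrow> sdt \<Rightarrow> sdt \<Rightarrow> real" where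
  "disagree n T' T = measure_pmf.prob (joint n T \<bind> (\<lambda>(x, y). run T' x \<bind> (\<lambda>y'. return_pmf (y', y))))
      {(y', y). y' \<noteq> y}"

end

theory Submission
  imports Defs "HOL-Analysis.Harmonic_Numbers"
begin

text \<open>Resolving the stochastic nodes by independent coins writes \<open>\<mu>\<^sub>T\<close> as an average of
  deterministic trees of size at most \<open>s\<close>. Truncating each of them at depth
  \<open>d = \<lceil>log\<^sub>2 (2s/\<epsilon>)\<rceil>\<close> changes its output on at most an \<open>s/2\<^sup>d\<close> fraction of the cube,
  so the average \<open>m\<close> of the truncations is within \<open>s/2\<^sup>d\<close> of \<open>\<mu>\<^sub>T\<close> in mean. By the
  second-moment method some \<open>k = \<lceil>4/\<epsilon>\<^sup>2\<rceil>\<close> truncated trees have an empirical mean \<open>a\<close>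
  whose mean square deviation from \<open>m\<close> is at most \<open>1/k\<close>. Their majority vote is a deterministic tree of
  depth \<open>kd\<close>; it can lose against the Bayes predictor \<open>round \<circ> \<mu>\<^sub>T\<close> only where \<open>a\<close> and
  \<open>\<mu>\<^sub>T\<close> lie on different sides of \<open>1/2\<close>, and then by at most
  \<open>2|a - \<mu>\<^sub>T| \<le> 2|\<mu>\<^sub>T - m| + \<epsilon> + 4(a - m)\<^sup>2/\<epsilon>\<close>, which averages to at most \<open>3\<epsilon>\<close>.\<close>

section \<open>Stochastic trees as mixtures of deterministic trees\<close>

fun out :: "sdt \<Rightarrow> bool list \<Rightarrow> bool" where
  "out (Leaf b) x = b"
| "out (Node i l r) x = (if x ! i then out r x else out l x)"
| "out (Stoch p l r) x = out l x" \<comment> \<open>arbitrary: \<open>out\<close> is only used on deterministic trees\<close>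

lemma run_deterministic: "deterministic D \<Longrightarrow> run D x = return_pmf (out D x)"
  by (induction D) auto

lemma tsize_pos: "0 < tsize D"
  by (induction D) auto

fun det_mixture :: "sdt \<Rightarrow> sdt pmf" where
  "det_mixture (Leaf b) = return_pmf (Leaf b)"
| "det_mixture (Node i l r) =
     det_mixture l \<bind> (\<lambda>Dl. det_mixture r \<bind> (\<lambda>Dr. return_pmf (Node i Dl Dr)))"
| "det_mixture (Stoch p l r) =
     bernoulli_pmf p \<bind> (\<lambda>c. if c then det_mixture l else det_mixture r)"

lemma run_eq_map_det_mixture: "run T x = map_pmf (\<lambda>D. out D x) (det_mixture T)"
proof (induction T)
  case (Stoch p l r)
  have "run (Stoch p l r) x =
      bernoulli_pmf p \<bind> (\<lambda>c. map_pmf (\<lambda>D. out D x) (if c then det_mixture l else det_mixture r))"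
    by (simp, rule bind_pmf_cong) (simp_all add: Stoch.IH)
  then show ?case by (simp add: map_bind_pmf)
qed (simp_all add: map_bind_pmf pmf.map_comp o_def map_pmf_const map_pmf_def[symmetric])

lemma finite_set_det_mixture: "finite (set_pmf (det_mixture T))"
  by (induction T) auto

lemma set_det_mixture:
  "wf_sdt n T \<Longrightarrow> D \<in> set_pmf (det_mixture T) \<Longrightarrow>
     deterministic D \<and> wf_sdt n D \<and> tsize D \<le> tsize T"
proof (induction T arbitrary: D)
  case (Node i l r)
  from Node.prems(2) obtain Dl Dr where
    "D = Node i Dl Dr" and Dl: "Dl \<in> set_pmf (det_mixture l)" and Dr: "Dr \<in> set_pmf (det_mixture r)"
    by auto
  moreover have "deterministic Dl \<and> wf_sdt n Dl \<and> tsize Dl \<le> tsize l"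
    using Node.IH(1) Node.prems(1) Dl by simp
  moreover have "deterministic Dr \<and> wf_sdt n Dr \<and> tsize Dr \<le> tsize r"
    using Node.IH(2) Node.prems(1) Dr by simp
  ultimately show ?case using Node.prems(1) by simp
next
  case (Stoch p l r)
  from Stoch.prems(2) have "D \<in> set_pmf (det_mixture l) \<or> D \<in> set_pmf (det_mixture r)"
    by (auto split: if_splits)
  then show ?case
  proof
    assume "D \<in> set_pmf (det_mixture l)"
    with Stoch.IH(1) Stoch.prems(1) show ?thesis by (simp add: trans_le_add1)
  next
    assume "D \<in> set_pmf (det_mixture r)"
    with Stoch.IH(2) Stoch.prems(1) show ?thesis by (simp add: trans_le_add2)
  qed
qed auto

lemma mu_eq_sum_det_mixture:
  "mu T x = (\<Sum>D\<in>set_pmf (det_mixture T). pmf (det_mixture T) D * of_bool (out D x))"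
proof -
  let ?P = "det_mixture T"
  have "mu T x = measure ?P ({D. out D x} \<inter> set_pmf ?P)"
    by (simp add: mu_def run_eq_map_det_mixture vimage_def measure_Int_set_pmf)
  also have "\<dots> = (\<Sum>D\<in>set_pmf ?P. pmf ?P D * of_bool (out D x))"
    by (simp add: measure_measure_pmf_finite finite_set_det_mixture Int_commute sum.inter_restrict)
  finally show ?thesis .
qed

section \<open>Truncation\<close>

lemma finite_cube: "finite (cube n)"
proof -
  have "cube n = {xs. set xs \<subseteq> UNIV \<and> length xs = n}"
    by (auto simp: cube_def)
  then show ?thesis
    using finite_lists_length_eq[of "UNIV :: bool set" n] by simp
qed

lemma cube_nonempty: "cube n \<noteq> {}"
  by (auto simp: cube_def intro: exI[of _ "replicate n False"])

definition consistent :: "(nat \<Rightarrow> bool option) \<Rightarrow> bool list \<Rightarrow> bool" where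
  "consistent \<rho> x \<longleftrightarrow> (\<forall>i b. \<rho> i = Some b \<longrightarrow> x ! i = b)"

definition subcube :: "nat \<Rightarrow> (nat \<Rightarrow> bool option) \<Rightarrow> bool list set" where
  "subcube n \<rho> = {x \<in> cube n. consistent \<rho> x}"

text \<open>The partial assignment \<open>\<rho>\<close> records the answers to the queries made on the current path:
  a repeated query is answered from \<open>\<rho>\<close> without spending depth, so every level of the
  truncation halves the subcube of inputs reaching it.\<close>

fun truncate :: "(nat \<Rightarrow> bool option) \<Rightarrow> nat \<Rightarrow> sdt \<Rightarrow> sdt" where
  "truncate \<rho> d (Leaf b) = Leaf b"
| "truncate \<rho> d (Node i l r) = (case \<rho> i of
      Some b \<Rightarrow> (if b then truncate \<rho> d r else truncate \<rho> d l)
    | None \<Rightarrow> (case d of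
        0 \<Rightarrow> Leaf False
      | Suc d' \<Rightarrow> Node i (truncate (\<rho>(i \<mapsto> False)) d' l) (truncate (\<rho>(i \<mapsto> True)) d' r)))"
| "truncate \<rho> d (Stoch p l r) = Leaf False"

fun hits_cut :: "(nat \<Rightarrow> bool option) \<Rightarrow> nat \<Rightarrow> sdt \<Rightarrow> bool list \<Rightarrow> bool" where
  "hits_cut \<rho> d (Leaf b) x = False"
| "hits_cut \<rho> d (Node i l r) x = (case \<rho> i of
      Some b \<Rightarrow> (if b then hits_cut \<rho> d r x else hits_cut \<rho> d l x)
    | None \<Rightarrow> (case d of
        0 \<Rightarrow> True
      | Suc d' \<Rightarrow> (if x ! i then hits_cut (\<rho>(i \<mapsto> True)) d' r x else hits_cut (\<rho>(i \<mapsto> False)) d' l x)))"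
| "hits_cut \<rho> d (Stoch p l r) x = True"

lemma deterministic_truncate: "deterministic (truncate \<rho> d D)"
  by (induction D arbitrary: \<rho> d) (auto split: option.splits nat.splits)

lemma wf_sdt_truncate: "wf_sdt n D \<Longrightarrow> wf_sdt n (truncate \<rho> d D)"
  by (induction D arbitrary: \<rho> d) (auto split: option.splits nat.splits)

lemma depth_truncate_le: "depth (truncate \<rho> d D) \<le> d"
  by (induction D arbitrary: \<rho> d) (auto split: option.splits nat.splits)

lemma out_truncate:
  "consistent \<rho> x \<Longrightarrow> \<not> hits_cut \<rho> d D x \<Longrightarrow> out (truncate \<rho> d D) x = out D x"
  by (induction D arbitrary: \<rho> d)
     (auto simp: consistent_def split: option.splits nat.splits if_splits)

lemma finite_subcube: "finite (subcube n \<rho>)"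
  by (simp add: subcube_def finite_cube)

lemma consistent_update:
  assumes "\<rho> i = None"
  shows "consistent (\<rho>(i \<mapsto> b)) x \<longleftrightarrow> x ! i = b \<and> consistent \<rho> x"
proof
  assume c: "consistent (\<rho>(i \<mapsto> b)) x"
  have "consistent \<rho> x"
    unfolding consistent_def
  proof (intro allI impI)
    fix j c' assume "\<rho> j = Some c'"
    with assms c show "x ! j = c'" by (cases "j = i") (auto simp: consistent_def)
  qed
  with c show "x ! i = b \<and> consistent \<rho> x" by (simp add: consistent_def)
next
  assume c: "x ! i = b \<and> consistent \<rho> x"
  show "consistent (\<rho>(i \<mapsto> b)) x"
    unfolding consistent_def
  proof (intro allI impI)
    fix j c' assume "(\<rho>(i \<mapsto> b)) j = Some c'"
    with c show "x ! j = c'" by (cases "j = i") (auto simp: consistent_def)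
  qed
qed

lemma consistent_update_nth: "consistent (\<rho>(i \<mapsto> b)) x \<Longrightarrow> x ! i = b"
  by (simp add: consistent_def)

lemma subcube_update_disjoint: "subcube n (\<rho>(i \<mapsto> True)) \<inter> subcube n (\<rho>(i \<mapsto> False)) = {}"
  by (auto simp: subcube_def dest: consistent_update_nth)

lemma consistent_list_update:
  "\<rho> i = None \<Longrightarrow> consistent \<rho> (x[i := c]) \<longleftrightarrow> consistent \<rho> x"
  unfolding consistent_def by (metis nth_list_update_neq option.distinct(1))

lemma subcube_split:
  "\<rho> i = None \<Longrightarrow> subcube n \<rho> = subcube n (\<rho>(i \<mapsto> True)) \<union> subcube n (\<rho>(i \<mapsto> False))"
  by (auto simp: subcube_def consistent_update)

lemma card_subcube_update:
  assumes "i < n" "\<rho> i = None"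
  shows "card (subcube n \<rho>) = 2 * card (subcube n (\<rho>(i \<mapsto> b)))"
proof -
  let ?flip = "\<lambda>x. x[i := \<not> x ! i]"
  have "bij_betw ?flip (subcube n (\<rho>(i \<mapsto> False))) (subcube n (\<rho>(i \<mapsto> True)))"
    by (rule bij_betw_byWitness[where f' = ?flip])
       (use assms in \<open>auto simp: subcube_def cube_def consistent_update consistent_list_update list_update_same_conv\<close>)
  then have "card (subcube n (\<rho>(i \<mapsto> False))) = card (subcube n (\<rho>(i \<mapsto> True)))"
    by (rule bij_betw_same_card)
  moreover have "card (subcube n \<rho>) = card (subcube n (\<rho>(i \<mapsto> True))) + card (subcube n (\<rho>(i \<mapsto> False)))"
    by (simp add: subcube_split[where \<rho>=\<rho> and i=i, OF assms(2)] card_Un_disjoint finite_subcube subcube_update_disjoint)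
  ultimately show ?thesis by (cases b) simp_all
qed

lemma card_hits_cut_le:
  "wf_sdt n D \<Longrightarrow> deterministic D \<Longrightarrow>
     card {x \<in> subcube n \<rho>. hits_cut \<rho> d D x} * 2 ^ d \<le> card (subcube n \<rho>) * tsize D"
proof (induction D arbitrary: \<rho> d)
  case (Node i l r)
  let ?S = "\<lambda>\<rho>. card (subcube n \<rho>)"
  show ?case
  proof (cases "\<rho> i")
    case (Some b)
    let ?c = "if b then r else l"
    have "card {x \<in> subcube n \<rho>. hits_cut \<rho> d (Node i l r) x} * 2 ^ d
        = card {x \<in> subcube n \<rho>. hits_cut \<rho> d ?c x} * 2 ^ d"
      using Some by simp
    also have "\<dots> \<le> ?S \<rho> * tsize ?c"
      using Node by (cases b) simp_all
    also have "\<dots> \<le> ?S \<rho> * tsize (Node i l r)"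
      by (cases b) simp_all
    finally show ?thesis .
  next
    case None
    show ?thesis
    proof (cases d)
      case 0
      have "card {x \<in> subcube n \<rho>. hits_cut \<rho> d (Node i l r) x} \<le> ?S \<rho>"
        by (intro card_mono finite_subcube) auto
      also have "\<dots> \<le> ?S \<rho> * tsize (Node i l r)"
        using tsize_pos[of l] by simp
      finally show ?thesis using 0 by simp
    next
      case (Suc d')
      let ?H = "\<lambda>b c. {x \<in> subcube n (\<rho>(i \<mapsto> b)). hits_cut (\<rho>(i \<mapsto> b)) d' c x}"
      have "{x \<in> subcube n \<rho>. hits_cut \<rho> d (Node i l r) x} = ?H True r \<union> ?H False l"
        using None Suc by (auto simp: subcube_def consistent_update)
      moreover have "?H True r \<inter> ?H False l = {}"
        using subcube_update_disjoint by blast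
      ultimately have "card {x \<in> subcube n \<rho>. hits_cut \<rho> d (Node i l r) x} * 2 ^ d
          = 2 * (card (?H True r) * 2 ^ d' + card (?H False l) * 2 ^ d')"
        using Suc by (simp add: card_Un_disjoint finite_subcube algebra_simps)
      also have "\<dots> \<le> 2 * (?S (\<rho>(i \<mapsto> True)) * tsize r + ?S (\<rho>(i \<mapsto> False)) * tsize l)"
        using Node by (intro mult_left_mono add_mono) simp_all
      also have "\<dots> = ?S \<rho> * tsize (Node i l r)"
        using Node.prems(1) None card_subcube_update[of i n \<rho>] by (simp add: algebra_simps)
      finally show ?thesis .
    qed
  qed
qed simp_all

lemma subcube_empty: "subcube n Map.empty = cube n"
  by (simp add: subcube_def consistent_def)

lemma abs_of_bool_out_truncate_le:
  "\<bar>of_bool (out D x) - of_bool (out (truncate \<rho> d D) x)\<bar> \<le> (of_bool (hits_cut \<rho> d D x) :: real)"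
  if "consistent \<rho> x"
  using out_truncate[OF that, of d D] by (cases "hits_cut \<rho> d D x") auto

definition truncated_mean :: "nat \<Rightarrow> sdt \<Rightarrow> bool list \<Rightarrow> real" where
  "truncated_mean d T x =
     (\<Sum>D\<in>set_pmf (det_mixture T). pmf (det_mixture T) D * of_bool (out (truncate Map.empty d D) x))"

lemma sum_abs_mu_sub_truncated_mean_le:
  assumes "wf_sdt n T"
  shows "(\<Sum>x\<in>cube n. \<bar>mu T x - truncated_mean d T x\<bar>) \<le> card (cube n) * tsize T / 2 ^ d"
proof -
  define P where "P = det_mixture T"
  let ?cut = "\<lambda>D x. of_bool (hits_cut Map.empty d D x) :: real"
  have finite: "finite (set_pmf P)" "finite (cube n)"
    by (simp_all add: P_def finite_set_det_mixture finite_cube)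
  have pointwise: "\<bar>mu T x - truncated_mean d T x\<bar> \<le> (\<Sum>D\<in>set_pmf P. pmf P D * ?cut D x)" for x
  proof -
    have "mu T x - truncated_mean d T x
        = (\<Sum>D\<in>set_pmf P. pmf P D * (of_bool (out D x) - of_bool (out (truncate Map.empty d D) x)))"
      by (simp only: mu_eq_sum_det_mixture truncated_mean_def P_def right_diff_distrib sum_subtractf)
    also have "\<bar>\<dots>\<bar> \<le> (\<Sum>D\<in>set_pmf P. pmf P D * ?cut D x)"
      by (rule order_trans[OF sum_abs sum_mono])
         (simp add: abs_mult mult_left_mono abs_of_bool_out_truncate_le consistent_def)
    finally show ?thesis .
  qed
  have per_tree: "real (card {x \<in> cube n. hits_cut Map.empty d D x}) \<le> card (cube n) * tsize T / 2 ^ d"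
    if "D \<in> set_pmf P" for D
  proof -
    have D: "deterministic D" "wf_sdt n D" "tsize D \<le> tsize T"
      using set_det_mixture[OF assms(1)] that by (simp_all add: P_def)
    have "card {x \<in> cube n. hits_cut Map.empty d D x} * 2 ^ d \<le> card (cube n) * tsize D"
      using card_hits_cut_le[OF D(2,1), of Map.empty d] by (simp add: subcube_empty)
    also have "\<dots> \<le> card (cube n) * tsize T"
      using D(3) by simp
    finally have "real (card {x \<in> cube n. hits_cut Map.empty d D x} * 2 ^ d) \<le> card (cube n) * tsize T"
      by (rule of_nat_mono)
    then show ?thesis
      by (simp add: pos_le_divide_eq)
  qed
  have "(\<Sum>x\<in>cube n. \<bar>mu T x - truncated_mean d T x\<bar>)
      \<le> (\<Sum>x\<in>cube n. \<Sum>D\<in>set_pmf P. pmf P D * ?cut D x)"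
    by (rule sum_mono[OF pointwise])
  also have "\<dots> = (\<Sum>D\<in>set_pmf P. \<Sum>x\<in>cube n. pmf P D * ?cut D x)"
    by (rule sum.swap)
  also have "\<dots> = (\<Sum>D\<in>set_pmf P. pmf P D * card {x \<in> cube n. hits_cut Map.empty d D x})"
    by (intro sum.cong refl) (simp add: finite mult.commute Int_def)
  also have "\<dots> \<le> (\<Sum>D\<in>set_pmf P. pmf P D * (card (cube n) * tsize T / 2 ^ d))"
    by (intro sum_mono mult_left_mono per_tree) simp_all
  also have "\<dots> = card (cube n) * tsize T / 2 ^ d"
    by (subst sum_distrib_right[symmetric]) (simp add: sum_pmf_eq_1 finite)
  finally show ?thesis .
qed

section \<open>Second-moment sampling\<close>

fun seq_expectation :: "'a set \<Rightarrow> ('a \<Rightarrow> real) \<Rightarrow> nat \<Rightarrow> ('a list \<Rightarrow> real) \<Rightarrow> real" where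
  "seq_expectation J w 0 F = F []"
| "seq_expectation J w (Suc k) F = (\<Sum>j\<in>J. w j * seq_expectation J w k (\<lambda>t. F (j # t)))"

lemma seq_expectation_add:
  "seq_expectation J w k (\<lambda>t. F t + G t) = seq_expectation J w k F + seq_expectation J w k G"
  by (induction k arbitrary: F G) (simp_all add: algebra_simps sum.distrib)

lemma seq_expectation_cmult: "seq_expectation J w k (\<lambda>t. c * F t) = c * seq_expectation J w k F"
  by (induction k arbitrary: F) (simp_all add: sum_distrib_left algebra_simps)

lemma seq_expectation_const:
  "(\<Sum>j\<in>J. w j) = 1 \<Longrightarrow> seq_expectation J w k (\<lambda>t. c) = c"
  by (induction k) (simp_all flip: sum_distrib_right)

lemma seq_expectation_sum:
  "finite X \<Longrightarrow> seq_expectation J w k (\<lambda>t. \<Sum>x\<in>X. F x t) = (\<Sum>x\<in>X. seq_expectation J w k (F x))"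
  by (induction X rule: finite_induct)
     (simp_all add: seq_expectation_add seq_expectation_cmult[where c = 0, simplified])

lemma exists_le_weighted_average:
  fixes G :: "'a \<Rightarrow> real"
  assumes "\<And>j. j \<in> J \<Longrightarrow> 0 \<le> w j" "(\<Sum>j\<in>J. w j) = 1" "(\<Sum>j\<in>J. w j * G j) \<le> c"
  shows "\<exists>j\<in>J. G j \<le> c"
proof (rule ccontr)
  assume "\<not> ?thesis"
  then have pos: "0 < G j - c" if "j \<in> J" for j
    using that by auto
  have nonneg: "0 \<le> w j * (G j - c)" if "j \<in> J" for j
    using assms(1)[OF that] pos[OF that] by simp
  have "finite J"
    using assms(2) sum.infinite[of J w] by auto
  have "(\<Sum>j\<in>J. w j * (G j - c)) = (\<Sum>j\<in>J. w j * G j) - c"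
    using assms(2) by (simp add: right_diff_distrib sum_subtractf flip: sum_distrib_right)
  moreover have "0 \<le> (\<Sum>j\<in>J. w j * (G j - c))"
    by (rule sum_nonneg) (rule nonneg)
  ultimately have "(\<Sum>j\<in>J. w j * (G j - c)) = 0"
    using assms(3) by linarith
  then have "w j = 0" if "j \<in> J" for j
    using sum_nonneg_eq_0_iff[OF \<open>finite J\<close>, of "\<lambda>j. w j * (G j - c)"] nonneg pos[OF that] that
    by auto
  then show False
    using assms(2) by simp
qed

lemma exists_seq_le_seq_expectation:
  assumes "\<And>j. j \<in> J \<Longrightarrow> 0 \<le> w j" "(\<Sum>j\<in>J. w j) = 1" "seq_expectation J w k F \<le> c"
  shows "\<exists>t. length t = k \<and> set t \<subseteq> J \<and> F t \<le> c"
  using assms(3)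
proof (induction k arbitrary: F)
  case (Suc k)
  then have "(\<Sum>j\<in>J. w j * seq_expectation J w k (\<lambda>t. F (j # t))) \<le> c"
    by simp
  then obtain j where "j \<in> J" "seq_expectation J w k (\<lambda>t. F (j # t)) \<le> c"
    using exists_le_weighted_average[where G = "\<lambda>j. seq_expectation J w k (\<lambda>t. F (j # t))"] assms(1,2)
    by blast
  with Suc.IH obtain t where "length t = k" "set t \<subseteq> J" "F (j # t) \<le> c"
    by blast
  with \<open>j \<in> J\<close> show ?case by (intro exI[of _ "j # t"]) simp
qed simp

lemma seq_expectation_sum_square_le:
  assumes "\<And>j. j \<in> J \<Longrightarrow> 0 \<le> w j" "(\<Sum>j\<in>J. w j) = 1"
    and "(\<Sum>j\<in>J. w j * a j) = 0" "\<And>j. j \<in> J \<Longrightarrow> \<bar>a j\<bar> \<le> 1"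
  shows "seq_expectation J w k (\<lambda>t. (\<Sum>j\<leftarrow>t. a j)\<^sup>2) \<le> k"
proof (induction k)
  case (Suc k)
  let ?E = "seq_expectation J w k" and ?S = "\<lambda>t. \<Sum>j\<leftarrow>t. a j"
  have extend: "?E (\<lambda>t. (?S (j # t))\<^sup>2) = (a j)\<^sup>2 + 2 * a j * ?E ?S + ?E (\<lambda>t. (?S t)\<^sup>2)" for j
  proof -
    have "?E (\<lambda>t. (?S (j # t))\<^sup>2) = ?E (\<lambda>t. (a j)\<^sup>2 + ((2 * a j) * ?S t + (?S t)\<^sup>2))"
      by (simp add: power2_eq_square algebra_simps)
    then show ?thesis
      by (simp add: seq_expectation_add seq_expectation_cmult seq_expectation_const assms(2))
  qed
  have "seq_expectation J w (Suc k) (\<lambda>t. (?S t)\<^sup>2)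
      = (\<Sum>j\<in>J. w j * ((a j)\<^sup>2 + 2 * a j * ?E ?S + ?E (\<lambda>t. (?S t)\<^sup>2)))"
    by (simp only: seq_expectation.simps extend)
  also have "\<dots> = (\<Sum>j\<in>J. w j * (a j)\<^sup>2) + 2 * ?E ?S * (\<Sum>j\<in>J. w j * a j)
      + ?E (\<lambda>t. (?S t)\<^sup>2) * (\<Sum>j\<in>J. w j)"
    by (simp add: algebra_simps sum.distrib sum_distrib_left sum_distrib_right)
  also have "\<dots> = (\<Sum>j\<in>J. w j * (a j)\<^sup>2) + ?E (\<lambda>t. (?S t)\<^sup>2)"
    using assms(2,3) by simp
  also have "(\<Sum>j\<in>J. w j * (a j)\<^sup>2) \<le> (\<Sum>j\<in>J. w j)"
    using assms(1,4) by (intro sum_mono) (simp add: abs_square_le_1 mult_left_le)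
  finally show ?case using Suc assms(2) by simp
qed simp

lemma exists_sample_sum_square_le:
  fixes f :: "'a \<Rightarrow> 'x \<Rightarrow> real"
  assumes "finite X" "\<And>j. j \<in> J \<Longrightarrow> 0 \<le> w j" "(\<Sum>j\<in>J. w j) = 1"
    and "\<And>j x. j \<in> J \<Longrightarrow> 0 \<le> f j x \<and> f j x \<le> 1"
  shows "\<exists>t. length t = k \<and> set t \<subseteq> J \<and>
    (\<Sum>x\<in>X. (\<Sum>j\<leftarrow>t. f j x - (\<Sum>i\<in>J. w i * f i x))\<^sup>2) \<le> card X * k"
proof -
  define m where "m x = (\<Sum>i\<in>J. w i * f i x)" for x
  have m_nonneg: "0 \<le> m x" for x
    unfolding m_def using assms(2,4) by (intro sum_nonneg) simp
  have m_le_1: "m x \<le> 1" for x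
  proof -
    have "m x \<le> (\<Sum>i\<in>J. w i)"
      unfolding m_def using assms(2,4) by (intro sum_mono) (simp add: mult_left_le)
    then show ?thesis using assms(3) by simp
  qed
  have bounded: "\<bar>f j x - m x\<bar> \<le> 1" if "j \<in> J" for j x
    using assms(4)[OF that, of x] m_nonneg[of x] m_le_1[of x] by (simp add: abs_le_iff)
  have centred: "(\<Sum>j\<in>J. w j * (f j x - m x)) = 0" for x
    using assms(3) by (simp add: m_def right_diff_distrib sum_subtractf flip: sum_distrib_right)
  have "seq_expectation J w k (\<lambda>t. \<Sum>x\<in>X. (\<Sum>j\<leftarrow>t. f j x - m x)\<^sup>2)
      = (\<Sum>x\<in>X. seq_expectation J w k (\<lambda>t. (\<Sum>j\<leftarrow>t. f j x - m x)\<^sup>2))"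
    by (rule seq_expectation_sum[OF assms(1)])
  also have "\<dots> \<le> (\<Sum>x\<in>X. real k)"
    by (intro sum_mono seq_expectation_sum_square_le assms(2,3) centred bounded)
  also have "\<dots> = card X * k"
    by simp
  finally show ?thesis
    unfolding m_def using exists_seq_le_seq_expectation[OF assms(2,3)] by blast
qed

section \<open>Majority votes\<close>

fun graft :: "sdt \<Rightarrow> (bool \<Rightarrow> sdt) \<Rightarrow> sdt" where
  "graft (Leaf b) f = f b"
| "graft (Node i l r) f = Node i (graft l f) (graft r f)"
| "graft (Stoch p l r) f = Stoch p (graft l f) (graft r f)"

lemma deterministic_graft:
  "deterministic D \<Longrightarrow> (\<And>b. deterministic (f b)) \<Longrightarrow> deterministic (graft D f)"
  by (induction D) auto

lemma wf_sdt_graft: "wf_sdt n D \<Longrightarrow> (\<And>b. wf_sdt n (f b)) \<Longrightarrow> wf_sdt n (graft D f)"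
  by (induction D) auto

lemma depth_graft_le: "(\<And>b. depth (f b) \<le> m) \<Longrightarrow> depth (graft D f) \<le> depth D + m"
  by (induction D) auto

lemma out_graft: "deterministic D \<Longrightarrow> out (graft D f) x = out (f (out D x)) x"
  by (induction D) auto

fun vote_tree :: "sdt list \<Rightarrow> nat \<Rightarrow> nat \<Rightarrow> sdt" where
  "vote_tree [] K c = Leaf (K \<le> 2 * c)"
| "vote_tree (D # Ds) K c = graft D (\<lambda>b. vote_tree Ds K (if b then Suc c else c))"

lemma deterministic_vote_tree:
  "\<forall>D\<in>set Ds. deterministic D \<Longrightarrow> deterministic (vote_tree Ds K c)"
  by (induction Ds arbitrary: c) (auto intro: deterministic_graft)

lemma wf_sdt_vote_tree: "\<forall>D\<in>set Ds. wf_sdt n D \<Longrightarrow> wf_sdt n (vote_tree Ds K c)"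
  by (induction Ds arbitrary: c) (auto intro: wf_sdt_graft)

lemma depth_vote_tree_le: "\<forall>D\<in>set Ds. depth D \<le> d \<Longrightarrow> depth (vote_tree Ds K c) \<le> length Ds * d"
proof (induction Ds arbitrary: c)
  case (Cons D Ds)
  then have "depth (vote_tree (D # Ds) K c) \<le> depth D + length Ds * d"
    by (simp add: depth_graft_le)
  with Cons.prems show ?case by simp
qed simp

lemma out_vote_tree:
  "\<forall>D\<in>set Ds. deterministic D \<Longrightarrow>
     out (vote_tree Ds K c) x \<longleftrightarrow> K \<le> 2 * (c + length (filter (\<lambda>D. out D x) Ds))"
  by (induction Ds arbitrary: c) (auto simp: out_graft)

lemma of_nat_length_filter: "of_nat (length (filter P xs)) = (\<Sum>x\<leftarrow>xs. of_bool (P x))"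
  by (induction xs) simp_all

section \<open>Excess error of a deterministic predictor\<close>

definition mismatch :: "real \<Rightarrow> bool \<Rightarrow> real" where
  "mismatch m b = (if b then 1 - m else m)"

lemma pmf_run_True: "pmf (run T x) True = mu T x"
  by (simp add: mu_def measure_pmf_single)

lemma pmf_run_False: "pmf (run T x) False = 1 - mu T x"
proof -
  have "(\<Sum>b\<in>UNIV. pmf (run T x) b) = 1"
    by (rule sum_pmf_eq_1) simp_all
  then show ?thesis
    by (simp add: UNIV_bool pmf_run_True)
qed

lemma pmf_run_not: "pmf (run T x) (\<not> b) = mismatch (mu T x) b"
  by (cases b) (simp_all add: pmf_run_True pmf_run_False mismatch_def)

lemma opt_eq_sum: "opt n T = (\<Sum>x\<in>cube n. mismatch (mu T x) (round (mu T x))) / card (cube n)"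
  by (simp add: opt_def unif_def measure_pmf_single pmf_run_not
      integral_pmf_of_set[OF cube_nonempty finite_cube])

lemma disagree_eq_sum:
  assumes "deterministic M"
  shows "disagree n M T = (\<Sum>x\<in>cube n. mismatch (mu T x) (out M x)) / card (cube n)"
proof -
  let ?Q = "\<lambda>x. map_pmf (\<lambda>y. (out M x, y)) (run T x)"
  have pmf_Q: "pmf (?Q x) (a, b) = of_bool (out M x = a) * pmf (run T x) b" for x a b
    by (cases "out M x = a") (auto simp: pmf_map_inj' inj_on_def intro!: pmf_map_outside)
  have "joint n T \<bind> (\<lambda>(x, y). run M x \<bind> (\<lambda>y'. return_pmf (y', y))) = unif n \<bind> ?Q"
    unfolding joint_def using assms
    by (simp add: bind_assoc_pmf bind_return_pmf run_deterministic map_pmf_def)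
  moreover have "{(y', y). y' \<noteq> y} = {(True, False), (False, True)}"
    by auto
  ultimately have "disagree n M T = pmf (unif n \<bind> ?Q) (True, False) + pmf (unif n \<bind> ?Q) (False, True)"
    unfolding disagree_def by (simp add: measure_measure_pmf_finite)
  also have "\<dots> = (\<Sum>x\<in>cube n. pmf (?Q x) (True, False) + pmf (?Q x) (False, True)) / card (cube n)"
    by (simp only: pmf_bind unif_def integral_pmf_of_set[OF cube_nonempty finite_cube])
       (simp add: sum.distrib add_divide_distrib)
  also have "\<dots> = (\<Sum>x\<in>cube n. mismatch (mu T x) (out M x)) / card (cube n)"
    by (intro arg_cong[where f = "\<lambda>s. s / _"] sum.cong refl)
       (simp add: pmf_Q pmf_run_True pmf_run_False mismatch_def)
  finally show ?thesis .
qed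

lemma abs_le_eps_plus_square:
  fixes z eps :: real
  assumes "0 < eps"
  shows "2 * \<bar>z\<bar> \<le> eps + 4 * z\<^sup>2 / eps"
proof -
  have "0 \<le> (2 * \<bar>z\<bar> - eps)\<^sup>2 / eps"
    using assms by simp
  also have "\<dots> = 4 * z\<^sup>2 / eps - 4 * \<bar>z\<bar> + eps"
    using assms by (simp add: power2_eq_square field_simps)
  finally show ?thesis
    by linarith
qed

lemma mismatch_threshold_le:
  fixes \<mu> m a eps :: real
  assumes "0 < eps"
  shows "mismatch \<mu> (1/2 \<le> a) - mismatch \<mu> (round \<mu>) \<le> 2 * \<bar>\<mu> - m\<bar> + eps + 4 * (a - m)\<^sup>2 / eps"
proof -
  have "mismatch \<mu> (1/2 \<le> a) - mismatch \<mu> (round \<mu>) \<le> 2 * \<bar>a - \<mu>\<bar>"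
    by (auto simp: mismatch_def round_def)
  also have "\<dots> \<le> 2 * \<bar>\<mu> - m\<bar> + 2 * \<bar>a - m\<bar>"
    by (simp add: abs_if)
  also have "2 * \<bar>a - m\<bar> \<le> eps + 4 * (a - m)\<^sup>2 / eps"
    by (rule abs_le_eps_plus_square[OF assms])
  finally show ?thesis
    by simp
qed

lemma disagree_le_opt_plus:
  assumes "deterministic M" "0 < eps" "\<And>x. x \<in> cube n \<Longrightarrow> out M x \<longleftrightarrow> 1/2 \<le> a x"
  shows "disagree n M T \<le> opt n T + eps
           + (\<Sum>x\<in>cube n. 2 * \<bar>mu T x - m x\<bar> + 4 * (a x - m x)\<^sup>2 / eps) / card (cube n)"
proof -
  have N: "0 < real (card (cube n))"
    using finite_cube cube_nonempty by (simp add: card_gt_0_iff)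
  have "disagree n M T - opt n T
      = (\<Sum>x\<in>cube n. mismatch (mu T x) (1/2 \<le> a x) - mismatch (mu T x) (round (mu T x))) / card (cube n)"
    by (simp add: disagree_eq_sum[OF assms(1)] opt_eq_sum assms(3) diff_divide_distrib sum_subtractf)
  also have "\<dots> \<le> (\<Sum>x\<in>cube n. 2 * \<bar>mu T x - m x\<bar> + eps + 4 * (a x - m x)\<^sup>2 / eps) / card (cube n)"
    using N by (intro divide_right_mono sum_mono mismatch_threshold_le assms(2)) simp
  also have "\<dots> = eps + (\<Sum>x\<in>cube n. 2 * \<bar>mu T x - m x\<bar> + 4 * (a x - m x)\<^sup>2 / eps) / card (cube n)"
    using N by (simp add: sum.distrib field_simps)
  finally show ?thesis
    by simp
qed

lemma exists_vote_of_truncations: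
  assumes "wf_sdt n T" "0 < k"
  shows "\<exists>M a. deterministic M \<and> wf_sdt n M \<and> depth M \<le> k * d \<and> (\<forall>x. out M x \<longleftrightarrow> 1/2 \<le> a x) \<and>
    (\<Sum>x\<in>cube n. (a x - truncated_mean d T x)\<^sup>2) \<le> card (cube n) / k"
proof -
  define P where "P = det_mixture T"
  define E where "E D = truncate Map.empty d D" for D
  define m where "m = truncated_mean d T"
  have "(\<Sum>D\<in>set_pmf P. pmf P D) = 1"
    by (rule sum_pmf_eq_1) (simp_all add: P_def finite_set_det_mixture)
  then obtain t where t: "length t = k" "set t \<subseteq> set_pmf P"
      "(\<Sum>x\<in>cube n. (\<Sum>D\<leftarrow>t. of_bool (out (E D) x) - m x)\<^sup>2) \<le> card (cube n) * k"
    using exists_sample_sum_square_le[of "cube n" "set_pmf P" "pmf P" "\<lambda>D x. of_bool (out (E D) x)" k]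
    by (auto simp: finite_cube m_def truncated_mean_def E_def P_def)
  define M where "M = vote_tree (map E t) k 0"
  have E_det: "\<forall>D\<in>set (map E t). deterministic D"
    by (simp add: E_def deterministic_truncate)
  have "wf_sdt n D" if "D \<in> set t" for D
    using that t(2) set_det_mixture[OF assms(1)] unfolding P_def by blast
  then have "deterministic M" "wf_sdt n M" "depth M \<le> k * d"
    using E_det t(1) depth_vote_tree_le[of "map E t" d k 0]
    by (auto simp: M_def E_def deterministic_vote_tree depth_truncate_le
        intro!: wf_sdt_vote_tree wf_sdt_truncate)
  define a where "a x = (\<Sum>D\<leftarrow>t. of_bool (out (E D) x)) / k" for x
  have "out M x \<longleftrightarrow> 1/2 \<le> a x" for x
    using out_vote_tree[OF E_det, of k 0 x] assms(2)
    by (simp add: M_def a_def of_nat_length_filter field_simps flip: of_nat_le_iff[where 'a = real])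
  moreover have "(\<Sum>x\<in>cube n. (a x - m x)\<^sup>2) \<le> card (cube n) / k"
  proof -
    have "a x - m x = (\<Sum>D\<leftarrow>t. of_bool (out (E D) x) - m x) / k" for x
      using t(1) assms(2) by (simp add: a_def sum_list_subtractf sum_list_triv field_simps)
    then have "(\<Sum>x\<in>cube n. (a x - m x)\<^sup>2) = (\<Sum>x\<in>cube n. (\<Sum>D\<leftarrow>t. of_bool (out (E D) x) - m x)\<^sup>2) / k\<^sup>2"
      by (simp add: power_divide sum_divide_distrib)
    also have "\<dots> \<le> card (cube n) * k / k\<^sup>2"
      using t(3) by (simp add: divide_right_mono)
    finally show ?thesis
      using assms(2) by (simp add: power2_eq_square)
  qed
  ultimately show ?thesis
    using \<open>deterministic M\<close> \<open>wf_sdt n M\<close> \<open>depth M \<le> k * d\<close> unfolding m_def by blast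
qed

lemma exists_shallow_approximation:
  assumes "wf_sdt n T" "0 < eps" "0 < k"
  shows "\<exists>M. deterministic M \<and> wf_sdt n M \<and> depth M \<le> k * d \<and>
    disagree n M T \<le> opt n T + 2 * real (tsize T) / 2 ^ d + eps + 4 / (eps * k)"
proof -
  obtain M a where M: "deterministic M" "wf_sdt n M" "depth M \<le> k * d"
    and out_M: "\<And>x. out M x \<longleftrightarrow> 1/2 \<le> a x"
    and sampling: "(\<Sum>x\<in>cube n. (a x - truncated_mean d T x)\<^sup>2) \<le> card (cube n) / k"
    using exists_vote_of_truncations[OF assms(1,3)] by blast
  let ?m = "truncated_mean d T" and ?N = "real (card (cube n))"
  have N: "0 < ?N"
    using finite_cube cube_nonempty by (simp add: card_gt_0_iff)
  have "disagree n M T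
      \<le> opt n T + eps + (\<Sum>x\<in>cube n. 2 * \<bar>mu T x - ?m x\<bar> + 4 * (a x - ?m x)\<^sup>2 / eps) / ?N"
    using disagree_le_opt_plus[OF M(1) assms(2) out_M] .
  also have "(\<Sum>x\<in>cube n. 2 * \<bar>mu T x - ?m x\<bar> + 4 * (a x - ?m x)\<^sup>2 / eps) / ?N
      = 2 * ((\<Sum>x\<in>cube n. \<bar>mu T x - ?m x\<bar>) / ?N) + 4 / eps * ((\<Sum>x\<in>cube n. (a x - ?m x)\<^sup>2) / ?N)"
    by (simp add: sum.distrib sum_distrib_left add_divide_distrib field_simps)
  also have "\<dots> \<le> 2 * (tsize T / 2 ^ d) + 4 / eps * (1 / k)"
  proof (intro add_mono mult_left_mono)
    show "(\<Sum>x\<in>cube n. \<bar>mu T x - ?m x\<bar>) / ?N \<le> tsize T / 2 ^ d"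
      using sum_abs_mu_sub_truncated_mean_le[OF assms(1), of d] N
      by (simp add: pos_divide_le_eq mult.commute)
    show "(\<Sum>x\<in>cube n. (a x - ?m x)\<^sup>2) / ?N \<le> 1 / k"
      using sampling N by (simp add: pos_divide_le_eq)
  qed (use assms(2) in simp_all)
  finally show ?thesis
    using M by (auto simp: algebra_simps)
qed

lemma nat_ceiling_log2_le:
  fixes y :: real
  assumes "2 < y"
  shows "real (nat \<lceil>log 2 (2 * y)\<rceil>) \<le> 6 * ln y"
proof -
  have ln_y: "2/3 \<le> ln y"
    using assms ln2_ge_two_thirds ln_less_cancel_iff[of 2 y] by linarith
  have "log 2 (2 * y) = 1 + ln y / ln 2"
    using assms by (simp add: log_def ln_mult add_divide_distrib)
  moreover have "0 \<le> ln y / ln 2" "ln y / ln 2 \<le> 3/2 * ln y"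
    using ln2_ge_two_thirds ln_y by (simp_all add: divide_le_eq)
  ultimately have "real (nat \<lceil>log 2 (2 * y)\<rceil>) \<le> 2 + 3/2 * ln y"
    using of_int_ceiling_le_add_one[of "1 + ln y / ln 2"] by linarith
  then show ?thesis
    using ln_y by simp
qed

lemma nat_ceiling_four_div_square_le:
  fixes eps :: real
  assumes "0 < eps" "eps < 1"
  shows "real (nat \<lceil>4 / eps\<^sup>2\<rceil>) \<le> 5 / eps\<^sup>2"
proof -
  have eps2: "0 < eps\<^sup>2" "eps\<^sup>2 < 1"
    using assms by (simp_all add: power_less_one_iff)
  have "real (nat \<lceil>4 / eps\<^sup>2\<rceil>) \<le> 4 / eps\<^sup>2 + 1"
    using of_int_ceiling_le_add_one[of "4 / eps\<^sup>2"] eps2 by simp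
  also have "\<dots> \<le> 5 / eps\<^sup>2"
    using eps2 by (simp add: pos_le_divide_eq distrib_right)
  finally show ?thesis .
qed

lemma truncation_parameters:
  fixes eps s :: real
  assumes "0 < eps" "eps < 1/2" "1 \<le> s"
  defines "d \<equiv> nat \<lceil>log 2 (2 * s / eps)\<rceil>" and "k \<equiv> nat \<lceil>4 / eps\<^sup>2\<rceil>"
  shows "2 * s / 2 ^ d \<le> eps" and "0 < k" and "4 / (eps * k) \<le> eps"
    and "real (k * d) \<le> 30 * ln (s / eps) / eps\<^sup>2"
proof -
  have "2 * s / eps = 2 powr log 2 (2 * s / eps)"
    using assms(1,3) by simp
  also have "\<dots> \<le> 2 ^ d"
    unfolding d_def by (simp add: powr_realpow[symmetric] real_nat_ceiling_ge)
  finally show "2 * s / 2 ^ d \<le> eps"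
    using assms(1) by (simp add: field_simps)
  have k_ge: "4 / eps\<^sup>2 \<le> k"
    unfolding k_def by (rule real_nat_ceiling_ge)
  moreover have "0 < 4 / eps\<^sup>2"
    using assms(1) by simp
  ultimately show "0 < k"
    by linarith
  from k_ge show "4 / (eps * k) \<le> eps"
    using assms(1) \<open>0 < k\<close> by (simp add: field_simps power2_eq_square)
  have "2 < s / eps"
    using assms by (simp add: field_simps)
  then have "real d \<le> 6 * ln (s / eps)"
    using nat_ceiling_log2_le[of "s / eps"] by (simp add: d_def)
  moreover have "real k \<le> 5 / eps\<^sup>2"
    unfolding k_def using assms(1,2) by (intro nat_ceiling_four_div_square_le) simp_all
  ultimately have "real (k * d) \<le> 5 / eps\<^sup>2 * (6 * ln (s / eps))"
    unfolding of_nat_mult by (intro mult_mono) simp_all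
  then show "real (k * d) \<le> 30 * ln (s / eps) / eps\<^sup>2"
    by simp
qed

theorem corollary7:
  shows "\<exists>C::real. C > 0 \<and>
    (\<forall>n T \<epsilon>. wf_sdt n T \<longrightarrow> 0 < \<epsilon> \<longrightarrow> \<epsilon> < 1/2 \<longrightarrow>
      (\<exists>T'. deterministic T' \<and> wf_sdt n T' \<and>
         real (depth T') \<le> C * ln (real (tsize T) / \<epsilon>) / \<epsilon>\<^sup>2 \<and>
         disagree n T' T \<le> opt n T + 3 * \<epsilon>))"
proof (intro exI[of _ 30] conjI allI impI)
  fix n T and eps :: real
  assume T: "wf_sdt n T" and eps: "0 < eps" "eps < 1/2"
  define d where "d = nat \<lceil>log 2 (2 * real (tsize T) / eps)\<rceil>"
  define k where "k = nat \<lceil>4 / eps\<^sup>2\<rceil>"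
  have s: "1 \<le> real (tsize T)"
    using tsize_pos[of T] by simp
  note params = truncation_parameters[OF eps s, folded d_def k_def]
  obtain M where M: "deterministic M" "wf_sdt n M" "depth M \<le> k * d"
    and err: "disagree n M T \<le> opt n T + 2 * real (tsize T) / 2 ^ d + eps + 4 / (eps * k)"
    using exists_shallow_approximation[OF T eps(1) params(2)] by blast
  have "real (depth M) \<le> real (k * d)"
    using M(3) by (rule of_nat_mono)
  also have "\<dots> \<le> 30 * ln (tsize T / eps) / eps\<^sup>2"
    by (rule params(4))
  finally have "real (depth M) \<le> 30 * ln (tsize T / eps) / eps\<^sup>2" .
  moreover have "disagree n M T \<le> opt n T + 3 * eps"
    using err params(1,3) by linarith
  ultimately show "\<exists>T'. deterministic T' \<and> wf_sdt n T' \<and>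
      real (depth T') \<le> 30 * ln (tsize T / eps) / eps\<^sup>2 \<and> disagree n T' T \<le> opt n T + 3 * eps"
    using M(1,2) by blast
qed simp

end
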